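(* For integers $n\ge1$, $\alpha\ge0$ and real (or complex) $a\ne b$, define $$Q_n(a,b,\alpha)=\int_{[0,\infty)^n}\prod_{i=1}^n(a-y_i)(b-y_i)^{\alpha}e^{-y_i}\,\Delta_n^2(\mathbf{y})\,dy_1\cdots dy_n.$$ Then $$Q_n(a,b,\alpha)=\frac{\overline{\mathcal{K}}_{n,\alpha}}{(b-a)^{\alpha}}\det\Big[L^{(0)}_{n+i-1}(a)\;\;\;L^{(j-2)}_{n+i+1-j}(b)\Big]_{\substack{i=1,\dots,\alpha+1\\ j=2,\dots,\alpha+1}},\qquad \overline{\mathcal{K}}_{n,\alpha}=(-1)^{n+\alpha(n+\alpha)}\frac{\prod_{i=1}^{\alpha+1}(n+i-1)!\,\prod_{i=0}^{n-1}i!\,(i+1)!}{\prod_{i=1}^{\alpha-1}i!}.$$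
   Context: $\Delta_n(\mathbf{y})=\prod_{1\le i<k\le n}(y_k-y_i)$. $L^{(\rho)}_M(z)=\frac{(\rho+1)_M}{M!}\sum_{j=0}^M\frac{(-M)_j}{(\rho+1)_j}\frac{z^j}{j!}$ is the generalized Laguerre polynomial, $(a)_k$ the Pochhammer symbol. Empty products equal $1$. $\det[A_i\;\;B_{i,j}]_{i=1,\dots,\alpha+1;\,j=2,\dots,\alpha+1}$ denotes the determinant of the $(\alpha+1)\times(\alpha+1)$ matrix with first column $(A_i)$ and $j$-th column $(B_{i,j})$ for $j=2,\dots,\alpha+1$. *)

theory Defs
  imports "HOL-Probability.Probability" "Jordan_Normal_Form.Determinant"
begin

definition vdm :: "nat \<Rightarrow> (nat \<Rightarrow> real) \<Rightarrow> real" where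
  "vdm n y = (\<Prod>k<n. \<Prod>i<k. (y k - y i))"

text \<open>Generalized Laguerre polynomial L^(rho)_M(z); by the standard convention
  it is 0 for negative degree M.\<close>
definition laguerre :: "nat \<Rightarrow> int \<Rightarrow> real \<Rightarrow> real" where
  "laguerre rho M z = (if M < 0 then 0 else
     pochhammer (real rho + 1) (nat M) / fact (nat M) *
     (\<Sum>j=0..nat M. pochhammer (- real_of_int M) j / pochhammer (real rho + 1) j
                      * z ^ j / fact j))"

definition Q :: "nat \<Rightarrow> real \<Rightarrow> real \<Rightarrow> nat \<Rightarrow> real" where
  "Q n a b \<alpha> = (\<integral>y. indicator {y. \<forall>i<n. 0 \<le> y i} y *
      (\<Prod>i<n. (a - y i) * (b - y i) ^ \<alpha> * exp (- y i)) * (vdm n y)\<^sup>2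
      \<partial>(PiM {..<n} (\<lambda>_. lborel)))"

definition Kbar :: "nat \<Rightarrow> nat \<Rightarrow> real" where
  "Kbar n \<alpha> = (-1) ^ (n + \<alpha> * (n + \<alpha>)) *
     ((\<Prod>i=1..\<alpha>+1. fact (n + i - 1)) * (\<Prod>i=0..<n. fact i * fact (i + 1)))
     / (\<Prod>i=1..<\<alpha>. fact i)"

end

theory Submission
  imports Defs
begin

text \<open>Write \<open>\<pi>(x) = (a - x)(b - x)\<^sup>\<alpha>\<close> and \<open>\<L> f = \<integral>\<^sub>0\<^sup>\<infinity> f(x) e\<^sup>-\<^sup>x dx\<close>. By Andr\'eief's
  identity \<open>Q\<^sub>n = n! det [\<L>(x\<^sup>i\<^sup>+\<^sup>j \<pi>)]\<^sub>i\<^sub>,\<^sub>j\<^sub><\<^sub>n\<close>. Now apply the \<open>n + \<alpha> + 1\<close> linear functionals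
  \<open>f \<mapsto> f(a)\<close>, the first \<open>\<alpha>\<close> Taylor coefficients of \<open>f\<close> at \<open>b\<close>, and \<open>f \<mapsto> \<L>(x\<^sup>j f)\<close> for \<open>j < n\<close>
  to two bases of the polynomials of degree at most \<open>n + \<alpha>\<close>. On the basis \<open>(x - b)\<^sup>c\<close> (\<open>c \<le> \<alpha>\<close>),
  \<open>x\<^sup>j \<pi>\<close> (\<open>j < n\<close>) the resulting matrix is block triangular, with determinant \<open>(b - a)\<^sup>\<alpha>\<close> times
  the Hankel determinant. On the basis of monic Laguerre polynomials it is block triangular
  by orthogonality, with determinant \<open>\<Prod>(j!)\<^sup>2\<close> times the Laguerre determinant of the theorem
  up to row and column scalings. Both bases are unitriangular (up to sign) in the monomials,
  so the two determinants agree.\<close>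

section \<open>Laguerre polynomials\<close>

definition laguerre_coeff :: "nat \<Rightarrow> nat \<Rightarrow> nat \<Rightarrow> real" where
  "laguerre_coeff \<rho> M l = (-1) ^ l * real ((M + \<rho>) choose (M - l)) / fact l"

definition laguerre_poly :: "nat \<Rightarrow> nat \<Rightarrow> real poly" where
  "laguerre_poly \<rho> M = (\<Sum>l\<le>M. monom (laguerre_coeff \<rho> M l) l)"

lemma poly_laguerre_poly: "poly (laguerre_poly \<rho> M) z = (\<Sum>l\<le>M. laguerre_coeff \<rho> M l * z ^ l)"
  by (simp add: laguerre_poly_def poly_sum poly_monom)

lemma coeff_laguerre_poly:
  "coeff (laguerre_poly \<rho> M) l = (if l \<le> M then laguerre_coeff \<rho> M l else 0)"
  by (simp add: laguerre_poly_def coeff_sum coeff_monom)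

lemma degree_laguerre_poly: "degree (laguerre_poly \<rho> M) \<le> M"
  by (rule degree_le) (simp add: coeff_laguerre_poly)

lemma fact_add_eq_pochhammer:
  "(fact (r + k) :: 'a :: {comm_semiring_1, semiring_char_0}) = fact r * pochhammer (of_nat r + 1) k"
proof -
  have "(fact (r + k) :: 'a) = pochhammer 1 (r + k)" by (simp add: pochhammer_fact)
  also have "\<dots> = pochhammer 1 r * pochhammer (1 + of_nat r) k" by (rule pochhammer_product')
  finally show ?thesis by (simp add: pochhammer_fact add.commute)
qed

lemma pochhammer_minus_of_nat:
  assumes "j \<le> M"
  shows "pochhammer (- of_nat M :: 'a :: field_char_0) j = (-1) ^ j * (fact M / fact (M - j))"
proof -
  have "pochhammer (- of_nat M :: 'a) j = (-1) ^ j * pochhammer (of_nat (M - j) + 1) j"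
    using assms by (simp add: pochhammer_minus of_nat_diff)
  also have "pochhammer (of_nat (M - j) + 1) j = (fact M / fact (M - j) :: 'a)"
    using fact_add_eq_pochhammer[of "M - j" j, where 'a='a] assms by (simp add: field_simps)
  finally show ?thesis .
qed

lemma laguerre_of_nat: "laguerre \<rho> (int M) z = poly (laguerre_poly \<rho> M) z"
proof -
  have "laguerre \<rho> (int M) z = (\<Sum>j\<le>M. pochhammer (real \<rho> + 1) M / fact M *
     (pochhammer (- real M) j / pochhammer (real \<rho> + 1) j * z ^ j / fact j))"
    by (simp add: laguerre_def sum_distrib_left atLeast0AtMost)
  also have "\<dots> = (\<Sum>j\<le>M. laguerre_coeff \<rho> M j * z ^ j)"
  proof (rule sum.cong[OF refl])
    fix j assume "j \<in> {..M}"
    then have j: "j \<le> M" by simp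
    have poch: "pochhammer (real \<rho> + 1) k = fact (\<rho> + k) / fact \<rho>" for k
      using fact_add_eq_pochhammer[of \<rho> k, where 'a=real] by (simp add: field_simps)
    have binom: "real ((M + \<rho>) choose (M - j)) = fact (M + \<rho>) / (fact (M - j) * fact (\<rho> + j))"
      using j by (subst binomial_fact) (auto simp: algebra_simps)
    show "pochhammer (real \<rho> + 1) M / fact M *
        (pochhammer (- real M) j / pochhammer (real \<rho> + 1) j * z ^ j / fact j)
      = laguerre_coeff \<rho> M j * z ^ j"
      unfolding laguerre_coeff_def pochhammer_minus_of_nat[OF j] poch binom
      by (simp add: field_simps add.commute)
  qed
  finally show ?thesis by (simp add: poly_laguerre_poly)
qed

lemma pcompose_power_left: "(p ^ l) \<circ>\<^sub>p q = (p \<circ>\<^sub>p q) ^ l"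
  by (induction l) (auto simp: pcompose_mult pcompose_1)

lemma pcompose_monom: "monom c l \<circ>\<^sub>p q = Polynomial.smult c (q ^ l)"
  by (simp add: monom_altdef pcompose_smult pcompose_power_left pcompose_pCons)

text \<open>The derivative rule \<open>D\<^sup>s L\<^sup>(\<^sup>0\<^sup>)\<^sub>N = (-1)\<^sup>s L\<^sup>(\<^sup>s\<^sup>)\<^sub>N\<^sub>-\<^sub>s\<close> in the form of Taylor coefficients at \<open>b\<close>.
  For \<open>N < s\<close> both sides vanish, the right one by the convention for negative degree.\<close>
lemma coeff_pcompose_laguerre_poly:
  "coeff (laguerre_poly 0 N \<circ>\<^sub>p [:b, 1:]) s = (-1) ^ s / fact s * laguerre s (int N - int s) b"
proof (cases "s \<le> N")
  case False
  have "degree (laguerre_poly 0 N \<circ>\<^sub>p [:b, 1:]) \<le> N"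
    using degree_pcompose_le[of "laguerre_poly 0 N" "[:b, 1:]"] degree_laguerre_poly[of 0 N] by simp
  then show ?thesis using False by (simp add: coeff_eq_0 laguerre_def)
next
  case True
  have lin: "coeff ([:b, 1:] ^ l) s = (if s \<le> l then real (l choose s) * b ^ (l - s) else 0)" for l
    using coeff_linear_poly_power[of s l b "1::real"] degree_linear_power[of b l]
    by (auto simp: coeff_eq_0)
  have "coeff (laguerre_poly 0 N \<circ>\<^sub>p [:b, 1:]) s
      = (\<Sum>l\<le>N. laguerre_coeff 0 N l * (if s \<le> l then real (l choose s) * b ^ (l - s) else 0))"
    by (simp add: laguerre_poly_def pcompose_sum pcompose_monom coeff_sum lin)
  also have "\<dots> = (\<Sum>l\<in>{s..N}. laguerre_coeff 0 N l * (real (l choose s) * b ^ (l - s)))"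
    by (rule sum.mono_neutral_cong_right) auto
  also have "\<dots> = (\<Sum>t\<le>N - s. laguerre_coeff 0 N (t + s) * (real ((t + s) choose s) * b ^ t))"
    using sum.shift_bounds_cl_nat_ivl[of "\<lambda>l. laguerre_coeff 0 N l * (real (l choose s) * b ^ (l - s))"
        0 s "N - s"] True
    by (simp add: atLeast0AtMost)
  also have "\<dots> = (\<Sum>t\<le>N - s. (-1) ^ s / fact s * (laguerre_coeff s (N - s) t * b ^ t))"
  proof (rule sum.cong[OF refl])
    fix t assume "t \<in> {..N - s}"
    then have "N - s + s = N" "N - s - t = N - (t + s)" using True by auto
    moreover have "real ((t + s) choose s) = fact (t + s) / (fact s * fact t)"
      by (subst binomial_fact) auto
    ultimately show "laguerre_coeff 0 N (t + s) * (real ((t + s) choose s) * b ^ t)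
        = (-1) ^ s / fact s * (laguerre_coeff s (N - s) t * b ^ t)"
      unfolding laguerre_coeff_def by (simp add: power_add field_simps)
  qed
  also have "\<dots> = (-1) ^ s / fact s * laguerre s (int N - int s) b"
    using True laguerre_of_nat[of s "N - s" b]
    by (simp add: poly_laguerre_poly sum_distrib_left of_nat_diff)
  finally show ?thesis .
qed

section \<open>Orthogonality of the Laguerre polynomials\<close>

definition alt_binomial_sum :: "nat \<Rightarrow> (nat \<Rightarrow> 'a :: comm_ring_1) \<Rightarrow> 'a" where
  "alt_binomial_sum k f = (\<Sum>l\<le>k. (-1) ^ l * of_nat (k choose l) * f l)"

lemma alt_binomial_sum_Suc:
  "alt_binomial_sum (Suc k) f = alt_binomial_sum k (\<lambda>l. f l - f (Suc l))"
proof -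
  define S where "S = (\<Sum>l\<le>k. (-1) ^ l * of_nat (k choose l) * f (Suc l))"
  define T where "T = (\<Sum>l\<le>k. (-1) ^ l * of_nat (k choose Suc l) * f (Suc l))"
  have "alt_binomial_sum (Suc k) f
      = f 0 + (\<Sum>l\<le>k. (-1) ^ Suc l * of_nat (Suc k choose Suc l) * f (Suc l))"
    unfolding alt_binomial_sum_def by (subst sum.atMost_Suc_shift) simp
  also have "(\<Sum>l\<le>k. (-1) ^ Suc l * of_nat (Suc k choose Suc l) * f (Suc l)) = - S - T"
    unfolding S_def T_def
    by (simp add: binomial_Suc_Suc sum.distrib algebra_simps sum_negf sum_subtractf)
  also have "f 0 = alt_binomial_sum k f + T"
    using sum.atMost_Suc_shift[of "\<lambda>l. (-1) ^ l * of_nat (k choose l) * f l" k]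
    by (simp add: alt_binomial_sum_def T_def binomial_eq_0 sum_negf algebra_simps)
  finally show ?thesis
    by (simp add: alt_binomial_sum_def S_def algebra_simps sum_subtractf)
qed

lemma pochhammer_Suc_diff:
  fixes x :: "'a :: comm_ring_1"
  shows "pochhammer (x + 1) (Suc j) - pochhammer x (Suc j) = of_nat (Suc j) * pochhammer (x + 1) j"
proof -
  have "pochhammer x (Suc j) = x * pochhammer (x + 1) j" by (simp add: pochhammer_rec)
  moreover have "pochhammer (x + 1) (Suc j) = pochhammer (x + 1) j * (x + 1 + of_nat j)"
    by (simp add: pochhammer_Suc)
  ultimately show ?thesis by (simp add: algebra_simps)
qed

lemma alt_binomial_sum_pochhammer:
  fixes c :: "'a :: field_char_0"
  shows "alt_binomial_sum k (\<lambda>l. pochhammer (c + of_nat l) j)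
    = (if k \<le> j then (-1) ^ k * (fact j / fact (j - k)) * pochhammer (c + of_nat k) (j - k) else 0)"
proof (induction k arbitrary: j c)
  case 0
  then show ?case by (simp add: alt_binomial_sum_def)
next
  case (Suc k)
  show ?case
  proof (cases j)
    case 0
    then show ?thesis unfolding alt_binomial_sum_Suc by (simp add: alt_binomial_sum_def)
  next
    case (Suc i)
    have "alt_binomial_sum (Suc k) (\<lambda>l. pochhammer (c + of_nat l) j)
        = alt_binomial_sum k (\<lambda>l. - (of_nat j * pochhammer (c + 1 + of_nat l) i))"
      unfolding alt_binomial_sum_Suc unfolding alt_binomial_sum_def
    proof (rule sum.cong[OF refl])
      fix l
      show "(-1) ^ l * of_nat (k choose l) *
          (pochhammer (c + of_nat l) j - pochhammer (c + of_nat (Suc l)) j)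
        = (-1) ^ l * of_nat (k choose l) * - (of_nat j * pochhammer (c + 1 + of_nat l) i)"
        using pochhammer_Suc_diff[of "c + of_nat l" i] Suc by (simp add: algebra_simps)
    qed
    also have "\<dots> = - of_nat j * alt_binomial_sum k (\<lambda>l. pochhammer (c + 1 + of_nat l) i)"
      by (simp add: alt_binomial_sum_def sum_distrib_left algebra_simps)
    finally have step: "alt_binomial_sum (Suc k) (\<lambda>l. pochhammer (c + of_nat l) j)
        = - of_nat j * alt_binomial_sum k (\<lambda>l. pochhammer (c + 1 + of_nat l) i)" .
    have "c + 1 + of_nat k = c + of_nat (Suc k)" by simp
    then show ?thesis
      unfolding step Suc.IH using Suc by (simp add: fact_Suc field_simps)
  qed
qed

text \<open>\<open>laguerre_integral f\<close> is \<open>\<integral>\<^sub>0\<^sup>\<infinity> f(y) e\<^sup>-\<^sup>y dy\<close>, computed from the moments \<open>k!\<close>.\<close>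
definition laguerre_integral :: "real poly \<Rightarrow> real" where
  "laguerre_integral f = (\<Sum>k\<le>degree f. coeff f k * fact k)"

lemma laguerre_integral_bound:
  "degree f \<le> D \<Longrightarrow> laguerre_integral f = (\<Sum>k\<le>D. coeff f k * fact k)"
  unfolding laguerre_integral_def by (rule sum.mono_neutral_left) (auto simp: coeff_eq_0)

lemma laguerre_integral_add: "laguerre_integral (f + g) = laguerre_integral f + laguerre_integral g"
proof -
  let ?D = "max (degree f) (degree g)"
  have "degree (f + g) \<le> ?D" by (rule degree_add_le) auto
  then show ?thesis
    using laguerre_integral_bound[of f ?D] laguerre_integral_bound[of g ?D]
      laguerre_integral_bound[of "f + g" ?D]
    by (simp add: sum.distrib algebra_simps)
qed

lemma laguerre_integral_smult: "laguerre_integral (Polynomial.smult c f) = c * laguerre_integral f"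
  using laguerre_integral_bound[of "Polynomial.smult c f" "degree f"]
  by (simp add: laguerre_integral_def sum_distrib_left algebra_simps)

lemma laguerre_integral_0 [simp]: "laguerre_integral 0 = 0"
  by (simp add: laguerre_integral_def)

lemma laguerre_integral_sum:
  "laguerre_integral (\<Sum>i\<in>A. f i) = (\<Sum>i\<in>A. laguerre_integral (f i))"
  by (induction A rule: infinite_finite_induct) (auto simp: laguerre_integral_add)

lemma laguerre_integral_monom: "laguerre_integral (monom c k) = c * fact k"
  using laguerre_integral_bound[of "monom c k" k]
  by (simp add: degree_monom_le coeff_monom if_distrib[where f="\<lambda>x. x * _"] cong: if_cong)

definition monic_laguerre :: "nat \<Rightarrow> real poly" where
  "monic_laguerre k = Polynomial.smult ((-1) ^ k * fact k) (laguerre_poly 0 k)"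

lemma coeff_monic_laguerre:
  "coeff (monic_laguerre k) l = (if l \<le> k then (-1) ^ k * fact k * laguerre_coeff 0 k l else 0)"
  by (simp add: monic_laguerre_def coeff_laguerre_poly)

lemma coeff_monic_laguerre_self: "coeff (monic_laguerre k) k = 1"
  by (simp add: coeff_monic_laguerre laguerre_coeff_def flip: power_add mult_2)

lemma degree_monic_laguerre: "degree (monic_laguerre k) \<le> k"
  by (rule degree_le) (simp add: coeff_monic_laguerre)

lemma laguerre_integral_monom_mult_monic_laguerre:
  "laguerre_integral (monom 1 j * monic_laguerre k)
    = (-1) ^ k * fact k * alt_binomial_sum k (\<lambda>l. pochhammer (1 + real l) j)"
proof -
  have "laguerre_integral (monom 1 j * monic_laguerre k)
      = (\<Sum>l\<le>k. (-1) ^ k * fact k * laguerre_coeff 0 k l * fact (j + l))"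
    by (simp add: monic_laguerre_def laguerre_poly_def laguerre_integral_smult sum_distrib_left
        mult_monom laguerre_integral_sum laguerre_integral_monom mult.assoc)
  also have "\<dots> = (\<Sum>l\<le>k. (-1) ^ k * fact k *
      ((-1) ^ l * real (k choose l) * pochhammer (1 + real l) j))"
  proof (rule sum.cong[OF refl])
    fix l assume "l \<in> {..k}"
    then have "k choose (k - l) = k choose l" by (simp add: binomial_symmetric[symmetric])
    moreover have "(fact (j + l) :: real) = fact l * pochhammer (real l + 1) j"
      using fact_add_eq_pochhammer[of l j] by (simp add: add.commute)
    ultimately show "(-1) ^ k * fact k * laguerre_coeff 0 k l * fact (j + l)
        = (-1) ^ k * fact k * ((-1) ^ l * real (k choose l) * pochhammer (1 + real l) j)"
      by (simp add: laguerre_coeff_def add.commute)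
  qed
  finally show ?thesis by (simp add: alt_binomial_sum_def sum_distrib_left)
qed

lemma monic_laguerre_orthogonal: "j < k \<Longrightarrow> laguerre_integral (monom 1 j * monic_laguerre k) = 0"
  by (simp add: laguerre_integral_monom_mult_monic_laguerre alt_binomial_sum_pochhammer)

lemma monic_laguerre_norm: "laguerre_integral (monom 1 k * monic_laguerre k) = fact k ^ 2"
  by (simp add: laguerre_integral_monom_mult_monic_laguerre alt_binomial_sum_pochhammer
      power2_eq_square flip: mult.assoc power_add mult_2)

section \<open>Determinant identities\<close>

lemma det_scale_rows_cols:
  fixes A :: "'a :: comm_ring_1 mat"
  assumes A: "A \<in> carrier_mat k k"
  shows "det (mat k k (\<lambda>(i, j). x i * y j * A $$ (i, j)))
    = (\<Prod>i = 0..<k. x i) * (\<Prod>j = 0..<k. y j) * det A"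
proof -
  have "det (mat k k (\<lambda>(i, j). x i * y j * A $$ (i, j)))
      = (\<Sum>p \<in> {p. p permutes {0..<k}}. signof p * (\<Prod>i = 0..<k. x i * y (p i) * A $$ (i, p i)))"
    by (subst det_def'[of _ k]) auto
  also have "\<dots> = (\<Sum>p \<in> {p. p permutes {0..<k}}. (\<Prod>i = 0..<k. x i) * (\<Prod>j = 0..<k. y j) *
      (signof p * (\<Prod>i = 0..<k. A $$ (i, p i))))"
  proof (rule sum.cong[OF refl])
    fix p assume "p \<in> {p. p permutes {0..<k}}"
    then have "(\<Prod>i = 0..<k. y (p i)) = (\<Prod>j = 0..<k. y j)"
      using prod.permute[of p "{0..<k}" y] by (simp add: comp_def)
    then show "signof p * (\<Prod>i = 0..<k. x i * y (p i) * A $$ (i, p i))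
        = (\<Prod>i = 0..<k. x i) * (\<Prod>j = 0..<k. y j) * (signof p * (\<Prod>i = 0..<k. A $$ (i, p i)))"
      by (simp add: prod.distrib)
  qed
  also have "\<dots> = (\<Prod>i = 0..<k. x i) * (\<Prod>j = 0..<k. y j) * det A"
    by (simp add: det_def'[OF A] sum_distrib_left)
  finally show ?thesis .
qed

text \<open>Subtracting \<open>y\<^sub>n\<close> times each column from the next one, done by right multiplication
  with a unitriangular matrix.\<close>
lemma vandermonde_mat_mult_shift:
  fixes y :: "nat \<Rightarrow> 'a :: comm_ring_1"
  shows "mat (Suc n) (Suc n) (\<lambda>(i, j). y i ^ j)
     * mat (Suc n) (Suc n) (\<lambda>(k, j). if k = j then 1 else if Suc k = j then - y n else 0)
   = mat (Suc n) (Suc n) (\<lambda>(i, j). if j = 0 then 1 else y i ^ (j - 1) * (y i - y n))"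
  (is "?V * ?E = ?B")
proof (rule eq_matI)
  fix i j assume "i < dim_row ?B" "j < dim_col ?B"
  then have i: "i < Suc n" and j: "j < Suc n" by auto
  have "(?V * ?E) $$ (i, j)
      = (\<Sum>k = 0..<Suc n. y i ^ k * (if k = j then 1 else if Suc k = j then - y n else 0))"
    using i j by (simp add: scalar_prod_def)
  also have "\<dots> = (\<Sum>k = 0..<Suc n. if k = j then y i ^ k else 0)
        + (\<Sum>k = 0..<Suc n. if Suc k = j then - y n * y i ^ k else 0)"
    by (subst sum.distrib[symmetric]) (rule sum.cong, auto)
  also have "\<dots> = ?B $$ (i, j)"
  proof (cases j)
    case (Suc j0)
    have "(\<Sum>k = 0..<Suc n. if Suc k = j then - y n * y i ^ k else 0)
        = (\<Sum>k = 0..<Suc n. if k = j0 then - y n * y i ^ k else 0)"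
      using Suc by (intro sum.cong) auto
    moreover have "Suc j0 = n \<Longrightarrow> y i ^ n = y i * y i ^ j0" by auto
    ultimately show ?thesis
      using i j Suc by (cases "Suc j0 < n") (auto simp: algebra_simps)
  qed (use i in simp)
  finally show "(?V * ?E) $$ (i, j) = ?B $$ (i, j)" .
qed auto

lemma vdm_Suc: "vdm (Suc n) y = vdm n y * (\<Prod>i = 0..<n. y n - y i)"
  by (simp add: vdm_def atLeast0LessThan)

lemma vdm_eq_det: "vdm n y = det (mat n n (\<lambda>(i, j). y i ^ j))"
proof (induction n)
  case 0
  then show ?case by (simp add: vdm_def)
next
  case (Suc n)
  define E where "E = mat (Suc n) (Suc n) (\<lambda>(k, j). if k = j then 1 else if Suc k = j then - y n else 0)"
  define B where "B = mat (Suc n) (Suc n) (\<lambda>(i, j). if j = 0 then 1 else y i ^ (j - 1) * (y i - y n))"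
  have E: "E \<in> carrier_mat (Suc n) (Suc n)" and B: "B \<in> carrier_mat (Suc n) (Suc n)"
    by (simp_all add: E_def B_def)
  have "det E = 1"
    by (subst det_upper_triangular[OF _ E]) (auto simp: upper_triangular_def E_def prod_list_diag_prod)
  then have "det (mat (Suc n) (Suc n) (\<lambda>(i, j). y i ^ j)) = det B"
    using det_mult[OF _ E, of "mat (Suc n) (Suc n) (\<lambda>(i, j). y i ^ j)"]
    by (simp add: E_def B_def vandermonde_mat_mult_shift)
  also have "det B = (\<Sum>j<Suc n. B $$ (n, j) * cofactor B n j)"
    by (rule laplace_expansion_row[OF B]) simp
  also have "\<dots> = cofactor B n 0"
    by (subst sum.cong[OF refl, where h="\<lambda>j. if j = 0 then cofactor B n 0 else 0"])
      (auto simp: B_def)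
  also have "mat_delete B n 0 = mat n n (\<lambda>(i, j). (y i - y n) * 1 * mat n n (\<lambda>(i, j). y i ^ j) $$ (i, j))"
    by (rule eq_matI) (auto simp: mat_delete_def B_def)
  then have "cofactor B n 0 = (-1) ^ n * ((\<Prod>i = 0..<n. y i - y n) * vdm n y)"
    using det_scale_rows_cols[of "mat n n (\<lambda>(i, j). y i ^ j)" n "\<lambda>i. y i - y n" "\<lambda>j. 1"]
    by (simp add: cofactor_def Suc.IH)
  also have "\<dots> = vdm (Suc n) y"
    using prod_uminus[of "\<lambda>i. y n - y i" "{0..<n}"] by (simp add: vdm_Suc)
  finally show ?case ..
qed

text \<open>The combinatorial core of Andr\'eief's identity.\<close>
lemma sum_permutations_eq_fact_hankel_det:
  fixes M :: "nat \<Rightarrow> 'a :: {comm_ring_1, ring_char_0}"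
  shows "(\<Sum>p\<in>{p. p permutes {0..<n}}. \<Sum>q\<in>{p. p permutes {0..<n}}.
           signof p * signof q * (\<Prod>i = 0..<n. M (p i + q i)))
       = fact n * det (mat n n (\<lambda>(i, j). M (i + j)))"
proof -
  let ?P = "{p. p permutes {0..<n}}"
  define D where "D = (\<Sum>r\<in>?P. signof r * (\<Prod>j = 0..<n. M (j + r j)))"
  have inner: "(\<Sum>q\<in>?P. signof p * signof q * (\<Prod>i = 0..<n. M (p i + q i))) = D"
    if p: "p permutes {0..<n}" for p
  proof -
    have "(\<Sum>q\<in>?P. signof p * signof q * (\<Prod>i = 0..<n. M (p i + q i)))
        = (\<Sum>r\<in>?P. signof p * signof (r \<circ> p) * (\<Prod>i = 0..<n. M (p i + (r \<circ> p) i)))"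
      by (rule sum_permutations_compose_right[OF p])
    also have "\<dots> = D"
      unfolding D_def
    proof (rule sum.cong[OF refl])
      fix r assume "r \<in> ?P"
      then have "permutation r" "permutation p"
        using p by (auto simp: permutation_permutes)
      then have sign: "signof (r \<circ> p) = signof r * signof p"
        by (simp add: sign_compose)
      have prod: "(\<Prod>i = 0..<n. M (p i + (r \<circ> p) i)) = (\<Prod>j = 0..<n. M (j + r j))"
        using prod.permute[OF p, of "\<lambda>j. M (j + r j)"] by (simp add: comp_def)
      have sq: "signof p * signof p = (1 :: 'a)"
        by (simp add: sign_def)
      have "signof p * (signof r * signof p) * X = (signof p * signof p) * (signof r * X)" for X :: 'a
        by (simp add: ac_simps)
      then show "signof p * signof (r \<circ> p) * (\<Prod>i = 0..<n. M (p i + (r \<circ> p) i))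
          = signof r * (\<Prod>j = 0..<n. M (j + r j))"
        unfolding sign prod sq by simp
    qed
    finally show ?thesis .
  qed
  have "(\<Sum>p\<in>?P. \<Sum>q\<in>?P. signof p * signof q * (\<Prod>i = 0..<n. M (p i + q i))) = fact n * D"
    using card_permutations[of "{0..<n}" n] by (simp add: inner)
  also have "D = det (mat n n (\<lambda>(i, j). M (i + j)))"
    unfolding D_def by (subst det_def'[of _ n]) (auto intro!: sum.cong prod.cong simp: permutes_def)
  finally show ?thesis .
qed

section \<open>The integral as a Hankel determinant\<close>

lemma has_bochner_integral_power_exp:
  "has_bochner_integral lborel (\<lambda>y::real. indicator {0..} y * (y ^ k * exp (- y))) (fact k)"
proof (rule has_bochner_integral_nn_integral)
  have "(\<integral>\<^sup>+y. ennreal (indicator {0..} y * (y ^ k * exp (- y))) \<partial>lborel)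
      = (\<integral>\<^sup>+y\<in>{0..}. ennreal (y ^ k * exp (- y)) \<partial>lborel)"
    by (rule nn_integral_cong) (auto split: split_indicator)
  also have "\<dots> = ennreal (fact k)"
    using nn_intergal_power_times_exp_Ici[of k] by simp
  finally show "(\<integral>\<^sup>+y. ennreal (indicator {0..} y * (y ^ k * exp (- y))) \<partial>lborel) = ennreal (fact k)" .
qed (auto split: split_indicator)

lemma has_bochner_integral_laguerre_integral:
  "has_bochner_integral lborel (\<lambda>y::real. indicator {0..} y * (poly f y * exp (- y)))
     (laguerre_integral f)"
proof -
  have "(\<lambda>y::real. indicator {0..} y * (poly f y * exp (- y)))
      = (\<lambda>y. \<Sum>k\<le>degree f. coeff f k * (indicator {0..} y * (y ^ k * exp (- y))))"
    by (auto simp: poly_altdef sum_distrib_left sum_distrib_right algebra_simps)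
  then show ?thesis
    unfolding laguerre_integral_def
    by (simp add: has_bochner_integral_sum has_bochner_integral_mult_right
        has_bochner_integral_power_exp)
qed

interpretation lborel_product: product_sigma_finite "\<lambda>_. lborel :: real measure"
  by (rule product_sigma_finite.intro) (rule sigma_finite_lborel)

lemma has_bochner_integral_PiM_lborel_prod:
  fixes g :: "'i \<Rightarrow> real \<Rightarrow> real"
  assumes "finite I" and "\<And>i. i \<in> I \<Longrightarrow> has_bochner_integral lborel (g i) (c i)"
  shows "has_bochner_integral (PiM I (\<lambda>_. lborel)) (\<lambda>x. \<Prod>i\<in>I. g i (x i)) (\<Prod>i\<in>I. c i)"
proof -
  have "integrable lborel (g i)" and "integral\<^sup>L lborel (g i) = c i" if "i \<in> I" for i
    using assms(2)[OF that] by (auto simp: has_bochner_integral_iff)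
  then show ?thesis
    using lborel_product.product_integrable_prod[OF assms(1), of g]
      lborel_product.product_integral_prod[OF assms(1), of g]
    by (simp add: has_bochner_integral_iff)
qed

lemma vdm_squared:
  "(vdm n y)\<^sup>2 = (\<Sum>p\<in>{p. p permutes {0..<n}}. \<Sum>q\<in>{p. p permutes {0..<n}}.
      signof p * signof q * (\<Prod>i<n. y i ^ (p i + q i)))"
proof -
  have vdm: "vdm n y = (\<Sum>p\<in>{p. p permutes {0..<n}}. signof p * (\<Prod>i = 0..<n. y i ^ p i))"
    unfolding vdm_eq_det by (subst det_def'[of _ n]) (auto intro!: sum.cong prod.cong simp: permutes_def)
  show ?thesis
    unfolding power2_eq_square vdm sum_product
    by (intro sum.cong refl) (simp add: atLeast0LessThan power_add prod.distrib algebra_simps)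
qed

definition weight_poly :: "real \<Rightarrow> real \<Rightarrow> nat \<Rightarrow> real poly" where
  "weight_poly a b \<alpha> = [:a, -1:] * [:b, -1:] ^ \<alpha>"

definition hankel_mat :: "real \<Rightarrow> real \<Rightarrow> nat \<Rightarrow> nat \<Rightarrow> real mat" where
  "hankel_mat a b \<alpha> n = mat n n (\<lambda>(i, j). laguerre_integral (monom 1 (i + j) * weight_poly a b \<alpha>))"

text \<open>Andr\'eief's identity: expanding \<open>\<Delta>\<^sub>n\<^sup>2\<close> as a product of two Vandermonde determinants
  turns the integrand into a signed sum of products of one-variable densities.\<close>
lemma Q_eq_fact_det_hankel: "Q n a b \<alpha> = fact n * det (hankel_mat a b \<alpha> n)"
proof -
  let ?P = "{p. p permutes {0..<n}}"
  define w where "w k y = indicator {0..} y * (poly (monom 1 k * weight_poly a b \<alpha>) y * exp (- y))"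
    for k and y :: real
  have integrand: "indicator {y. \<forall>i<n. 0 \<le> y i} y * (\<Prod>i<n. (a - y i) * (b - y i) ^ \<alpha> * exp (- y i))
      * (vdm n y)\<^sup>2 = (\<Sum>p\<in>?P. \<Sum>q\<in>?P. signof p * signof q * (\<Prod>i<n. w (p i + q i) (y i)))" for y
  proof -
    have "indicator {y. \<forall>i<n. 0 \<le> y i} y = (\<Prod>i<n. indicator {0..} (y i) :: real)"
      by (auto simp: indicator_def prod_zero_iff)
    moreover have "(\<Prod>i<n. w (p i + q i) (y i)) = (\<Prod>i<n. indicator {0..} (y i))
        * (\<Prod>i<n. (a - y i) * (b - y i) ^ \<alpha> * exp (- y i)) * (\<Prod>i<n. y i ^ (p i + q i))" for p q
    proof -
      have "w k t = indicator {0..} t * ((a - t) * (b - t) ^ \<alpha> * exp (- t)) * t ^ k" for k t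
        by (simp add: w_def weight_poly_def poly_monom algebra_simps)
      then show ?thesis by (simp add: prod.distrib)
    qed
    ultimately show ?thesis
      by (simp add: vdm_squared sum_distrib_left ac_simps)
  qed
  have "has_bochner_integral (PiM {..<n} (\<lambda>_. lborel))
      (\<lambda>y. \<Sum>p\<in>?P. \<Sum>q\<in>?P. signof p * signof q * (\<Prod>i<n. w (p i + q i) (y i)))
      (\<Sum>p\<in>?P. \<Sum>q\<in>?P. signof p * signof q *
        (\<Prod>i<n. laguerre_integral (monom 1 (p i + q i) * weight_poly a b \<alpha>)))"
    unfolding w_def
    by (intro has_bochner_integral_sum has_bochner_integral_mult_right
        has_bochner_integral_PiM_lborel_prod has_bochner_integral_laguerre_integral) simp
  then have "Q n a b \<alpha> = (\<Sum>p\<in>?P. \<Sum>q\<in>?P. signof p * signof q *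
      (\<Prod>i<n. laguerre_integral (monom 1 (p i + q i) * weight_poly a b \<alpha>)))"
    unfolding Q_def integrand by (rule has_bochner_integral_integral_eq)
  then show ?thesis
    using sum_permutations_eq_fact_hankel_det[where n=n and
        M="\<lambda>k. laguerre_integral (monom 1 k * weight_poly a b \<alpha>)"]
    by (simp add: hankel_mat_def atLeast0LessThan)
qed

section \<open>Relating the Hankel determinant to Laguerre polynomials\<close>

lemma mat_mult_coeff_mat:
  fixes \<phi> :: "nat \<Rightarrow> 'a :: comm_ring_1 poly \<Rightarrow> 'a"
  assumes add: "\<And>r f g. \<phi> r (f + g) = \<phi> r f + \<phi> r g"
    and smult: "\<And>r c f. \<phi> r (Polynomial.smult c f) = c * \<phi> r f"
    and deg: "\<And>c. c < N \<Longrightarrow> degree (g c) < N"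
  shows "mat M N (\<lambda>(r, k). \<phi> r (monom 1 k)) * mat N N (\<lambda>(k, c). coeff (g c) k)
    = mat M N (\<lambda>(r, c). \<phi> r (g c))"
proof (rule eq_matI)
  fix r c assume "r < dim_row (mat M N (\<lambda>(r, c). \<phi> r (g c)))" "c < dim_col (mat M N (\<lambda>(r, c). \<phi> r (g c)))"
  then have r: "r < M" and c: "c < N" by auto
  have "\<phi> r 0 = 0"
    using smult[of r 0 0] by simp
  then have sum: "\<phi> r (\<Sum>k\<in>A. f k) = (\<Sum>k\<in>A. \<phi> r (f k))" for A and f :: "nat \<Rightarrow> 'a poly"
    by (induction A rule: infinite_finite_induct) (auto simp: add)
  have "g c = (\<Sum>k<N. Polynomial.smult (coeff (g c) k) (monom 1 k))"
    using poly_as_sum_of_monoms'[of "g c" "N - 1"] deg[OF c] c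
    by (simp add: smult_monom lessThan_Suc_atMost[symmetric])
  then have "\<phi> r (g c) = \<phi> r (\<Sum>k<N. Polynomial.smult (coeff (g c) k) (monom 1 k))"
    by (rule arg_cong)
  also have "\<dots> = (\<Sum>k<N. \<phi> r (monom 1 k) * coeff (g c) k)"
    by (simp add: sum smult mult.commute)
  finally have "\<phi> r (g c) = (\<Sum>k<N. \<phi> r (monom 1 k) * coeff (g c) k)" .
  then show "(mat M N (\<lambda>(r, k). \<phi> r (monom 1 k)) * mat N N (\<lambda>(k, c). coeff (g c) k)) $$ (r, c)
      = mat M N (\<lambda>(r, c). \<phi> r (g c)) $$ (r, c)"
    using r c by (simp add: scalar_prod_def atLeast0LessThan)
qed auto

lemma det_coeff_mat:
  assumes "\<And>c. c < N \<Longrightarrow> degree (g c) \<le> c"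
  shows "det (mat N N (\<lambda>(k, c). coeff (g c) k)) = (\<Prod>c<N. coeff (g c) c)"
proof -
  have "coeff (g c) k = 0" if "c < k" "k < N" for c k
    using assms[of c] that by (intro coeff_eq_0) auto
  then have "upper_triangular (mat N N (\<lambda>(k, c). coeff (g c) k))"
    by (auto simp: upper_triangular_def)
  then show ?thesis
    by (subst det_upper_triangular) (auto simp: prod_list_diag_prod atLeast0LessThan)
qed

definition phi :: "real \<Rightarrow> real \<Rightarrow> nat \<Rightarrow> nat \<Rightarrow> real poly \<Rightarrow> real" where
  "phi a b \<alpha> r f = (if r = 0 then poly f a else if r \<le> \<alpha> then coeff (f \<circ>\<^sub>p [:b, 1:]) (r - 1)
     else laguerre_integral (monom 1 (r - Suc \<alpha>) * f))"

lemma phi_add: "phi a b \<alpha> r (f + g) = phi a b \<alpha> r f + phi a b \<alpha> r g"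
  by (simp add: phi_def pcompose_add distrib_left laguerre_integral_add)

lemma phi_smult: "phi a b \<alpha> r (Polynomial.smult c f) = c * phi a b \<alpha> r f"
  by (simp add: phi_def pcompose_smult laguerre_integral_smult)

text \<open>A basis adapted to the conditions: multiples of the weight polynomial satisfy
  all conditions except the moments.\<close>
definition adapted_basis :: "real \<Rightarrow> real \<Rightarrow> nat \<Rightarrow> nat \<Rightarrow> real poly" where
  "adapted_basis a b \<alpha> c = (if c \<le> \<alpha> then [:-b, 1:] ^ c else monom 1 (c - Suc \<alpha>) * weight_poly a b \<alpha>)"

lemma degree_weight_poly: "degree (weight_poly a b \<alpha>) = Suc \<alpha>"
  unfolding weight_poly_def by (subst degree_mult_eq) (auto simp: degree_power_eq)

lemma degree_adapted_basis: "degree (adapted_basis a b \<alpha> c) = c"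
proof -
  have "weight_poly a b \<alpha> \<noteq> 0"
    using degree_weight_poly[of a b \<alpha>] by auto
  then show ?thesis
    using degree_weight_poly[of a b \<alpha>]
    by (auto simp: adapted_basis_def degree_linear_power degree_mult_eq degree_monom_eq)
qed

lemma coeff_adapted_basis_self:
  "coeff (adapted_basis a b \<alpha> c) c = (if c \<le> \<alpha> then 1 else (-1) ^ Suc \<alpha>)"
proof -
  have "coeff (weight_poly a b \<alpha>) (Suc \<alpha>) = lead_coeff (weight_poly a b \<alpha>)"
    by (simp add: degree_weight_poly)
  also have "\<dots> = (-1) ^ Suc \<alpha>"
    unfolding weight_poly_def lead_coeff_mult lead_coeff_power by simp
  finally have "coeff (weight_poly a b \<alpha>) (Suc \<alpha>) = (-1) ^ Suc \<alpha>" .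
  then show ?thesis
    by (auto simp: adapted_basis_def coeff_monom_mult coeff_linear_power)
qed

lemma det_coeff_mat_adapted_basis:
  "det (mat (Suc \<alpha> + n) (Suc \<alpha> + n) (\<lambda>(k, c). coeff (adapted_basis a b \<alpha> c) k))
    = (-1) ^ (Suc \<alpha> * n)"
proof -
  have "det (mat (Suc \<alpha> + n) (Suc \<alpha> + n) (\<lambda>(k, c). coeff (adapted_basis a b \<alpha> c) k))
      = (\<Prod>c<Suc \<alpha> + n. if c \<le> \<alpha> then 1 else (-1) ^ Suc \<alpha>)"
    by (simp add: det_coeff_mat degree_adapted_basis coeff_adapted_basis_self)
  also have "\<dots> = (\<Prod>c\<in>{Suc \<alpha>..<Suc \<alpha> + n}. (-1) ^ Suc \<alpha>)"
    by (rule prod.mono_neutral_cong_right) auto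
  also have "\<dots> = ((-1) ^ Suc \<alpha>) ^ n" by simp
  also have "\<dots> = (-1) ^ (Suc \<alpha> * n)" by (simp only: power_mult)
  finally show ?thesis .
qed

lemma phi_monom_mult_weight_poly:
  assumes "r \<le> \<alpha>"
  shows "phi a b \<alpha> r (monom 1 i * weight_poly a b \<alpha>) = 0"
proof (cases r)
  case 0
  then show ?thesis by (simp add: phi_def weight_poly_def)
next
  case (Suc s)
  have shift: "[:b, -1:] \<circ>\<^sub>p [:b, 1:] = monom (-1) 1"
    by (simp add: pcompose_pCons monom_Suc monom_0)
  have "(monom 1 i * weight_poly a b \<alpha>) \<circ>\<^sub>p [:b, 1:] =
      monom ((-1) ^ \<alpha>) \<alpha> * ((monom 1 i \<circ>\<^sub>p [:b, 1:]) * ([:a, -1:] \<circ>\<^sub>p [:b, 1:]))"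
    unfolding weight_poly_def pcompose_mult pcompose_power_left shift monom_power mult_1
    by (simp only: ac_simps)
  then show ?thesis using Suc assms by (simp add: phi_def coeff_monom_mult)
qed

lemma det_phi_powers: "det (mat (Suc \<alpha>) (Suc \<alpha>) (\<lambda>(r, c). phi a b \<alpha> r ([:-b, 1:] ^ c))) = (b - a) ^ \<alpha>"
  (is "det ?V = _")
proof -
  have V: "?V \<in> carrier_mat (\<alpha> + 1) (\<alpha> + 1)" by simp
  have shift: "[:-b, 1:] \<circ>\<^sub>p [:b, 1:] = monom 1 1"
    by (simp add: pcompose_pCons monom_Suc monom_0)
  have row: "phi a b \<alpha> (Suc s) ([:-b, 1:] ^ c) = (if s = c then 1 else 0)" if "s < \<alpha>" for s c
    using that by (simp add: phi_def pcompose_power_left shift monom_power coeff_monom)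
  have row0: "phi a b \<alpha> 0 ([:-b, 1:] ^ c) = (a - b) ^ c" for c
    by (simp add: phi_def poly_power)
  let ?W = "mat (\<alpha> + 1) (\<alpha> + 1) (\<lambda>(i, j). ?V $$ (if i < \<alpha> then i + 1 else i - \<alpha>, j))"
  have "det ?V = (-1) ^ (\<alpha> * 1) * det ?W"
    by (rule det_swap_rows[OF V])
  also have "det ?W = prod_list (diag_mat ?W)"
    by (rule det_lower_triangular[of "\<alpha> + 1"]) (auto simp: row)
  also have "\<dots> = (\<Prod>i = 0..<\<alpha> + 1. ?V $$ (if i < \<alpha> then i + 1 else i - \<alpha>, i))"
    by (simp add: prod_list_diag_prod)
  also have "\<dots> = (a - b) ^ \<alpha>"
    by (simp add: row row0)
  finally show ?thesis by (simp add: power_mult_distrib[symmetric])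
qed

lemma det_phi_adapted_basis:
  "det (mat (Suc \<alpha> + n) (Suc \<alpha> + n) (\<lambda>(r, c). phi a b \<alpha> r (adapted_basis a b \<alpha> c)))
    = (b - a) ^ \<alpha> * det (hankel_mat a b \<alpha> n)"
proof -
  define V where "V = mat (Suc \<alpha>) (Suc \<alpha>) (\<lambda>(r, c). phi a b \<alpha> r ([:-b, 1:] ^ c))"
  define A where "A = mat n (Suc \<alpha>) (\<lambda>(j, c). phi a b \<alpha> (Suc \<alpha> + j) ([:-b, 1:] ^ c))"
  have "det (mat (Suc \<alpha> + n) (Suc \<alpha> + n) (\<lambda>(r, c). phi a b \<alpha> r (adapted_basis a b \<alpha> c)))
      = det (four_block_mat V (0\<^sub>m (Suc \<alpha>) n) A (hankel_mat a b \<alpha> n))"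
    by (rule arg_cong[where f=det], rule eq_matI)
      (auto simp: V_def A_def hankel_mat_def adapted_basis_def phi_monom_mult_weight_poly,
       auto simp: phi_def mult_monom mult.assoc[symmetric] add.commute)
  also have "\<dots> = det V * det (hankel_mat a b \<alpha> n)"
    by (rule det_four_block_mat_upper_right_zero) (auto simp: V_def A_def hankel_mat_def)
  finally show ?thesis
    by (simp add: V_def det_phi_powers)
qed

lemma det_phi_monic_laguerre:
  "det (mat (Suc \<alpha> + n) (Suc \<alpha> + n) (\<lambda>(r, c). phi a b \<alpha> r (monic_laguerre c)))
    = (-1) ^ (Suc \<alpha> * n) * det (mat (Suc \<alpha>) (Suc \<alpha>) (\<lambda>(r, l). phi a b \<alpha> r (monic_laguerre (n + l))))
      * (\<Prod>j<n. fact j ^ 2)"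
proof -
  define W where "W = mat (Suc \<alpha> + n) (Suc \<alpha> + n) (\<lambda>(r, c). phi a b \<alpha> r (monic_laguerre c))"
  define R where "R = mat (Suc \<alpha>) (Suc \<alpha>) (\<lambda>(r, l). phi a b \<alpha> r (monic_laguerre (n + l)))"
  define X where "X = mat (Suc \<alpha>) n (\<lambda>(r, c). phi a b \<alpha> r (monic_laguerre c))"
  define G where "G = mat n n (\<lambda>(j, c). laguerre_integral (monom 1 j * monic_laguerre c))"
  text \<open>Moving the last \<open>\<alpha> + 1\<close> columns to the front exposes the orthogonality relations.\<close>
  have "det W = (-1) ^ (Suc \<alpha> * n) *
      det (mat (Suc \<alpha> + n) (Suc \<alpha> + n) (\<lambda>(i, j). W $$ (i, if j < Suc \<alpha> then j + n else j - Suc \<alpha>)))"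
    by (rule det_swap_cols) (simp add: W_def)
  also have "mat (Suc \<alpha> + n) (Suc \<alpha> + n) (\<lambda>(i, j). W $$ (i, if j < Suc \<alpha> then j + n else j - Suc \<alpha>))
      = four_block_mat R X (0\<^sub>m n (Suc \<alpha>)) G"
    by (rule eq_matI)
      (auto simp: W_def R_def X_def G_def phi_def add.commute intro!: monic_laguerre_orthogonal)
  also have "det \<dots> = det R * det G"
    by (rule det_four_block_mat_lower_left_zero) (auto simp: R_def X_def G_def)
  also have "det G = (\<Prod>j<n. fact j ^ 2)"
    by (subst det_lower_triangular[of n])
      (auto simp: G_def monic_laguerre_orthogonal monic_laguerre_norm prod_list_diag_prod atLeast0LessThan)
  finally show ?thesis by (simp add: W_def R_def)
qed

lemma det_hankel_mat_eq:
  "(b - a) ^ \<alpha> * det (hankel_mat a b \<alpha> n)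
    = det (mat (Suc \<alpha>) (Suc \<alpha>) (\<lambda>(r, l). phi a b \<alpha> r (monic_laguerre (n + l)))) * (\<Prod>j<n. fact j ^ 2)"
proof -
  let ?N = "Suc \<alpha> + n"
  define F where "F = mat ?N ?N (\<lambda>(r, k). phi a b \<alpha> r (monom 1 k))"
  define G where "G = mat ?N ?N (\<lambda>(k, c). coeff (adapted_basis a b \<alpha> c) k)"
  define U where "U = mat ?N ?N (\<lambda>(k, c). coeff (monic_laguerre c) k)"
  have "det F * (-1) ^ (Suc \<alpha> * n) = det F * det G"
    by (simp only: G_def det_coeff_mat_adapted_basis)
  also have "\<dots> = det (F * G)"
    by (rule det_mult[symmetric, of _ ?N]) (simp_all add: F_def G_def)
  also have "F * G = mat ?N ?N (\<lambda>(r, c). phi a b \<alpha> r (adapted_basis a b \<alpha> c))"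
    unfolding F_def G_def
    by (rule mat_mult_coeff_mat) (auto simp: phi_add phi_smult degree_adapted_basis)
  also have "det \<dots> = (b - a) ^ \<alpha> * det (hankel_mat a b \<alpha> n)"
    by (rule det_phi_adapted_basis)
  finally have FG: "det F * (-1) ^ (Suc \<alpha> * n) = (b - a) ^ \<alpha> * det (hankel_mat a b \<alpha> n)" .
  have "det F = det F * det U"
    unfolding U_def by (subst det_coeff_mat) (auto simp: degree_monic_laguerre coeff_monic_laguerre_self)
  also have "\<dots> = det (F * U)"
    by (rule det_mult[symmetric, of _ ?N]) (simp_all add: F_def U_def)
  also have "F * U = mat ?N ?N (\<lambda>(r, c). phi a b \<alpha> r (monic_laguerre c))"
    unfolding F_def U_def
    by (rule mat_mult_coeff_mat) (auto simp: phi_add phi_smult intro: le_less_trans[OF degree_monic_laguerre])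
  finally have FU: "det F = (-1) ^ (Suc \<alpha> * n)
      * det (mat (Suc \<alpha>) (Suc \<alpha>) (\<lambda>(r, l). phi a b \<alpha> r (monic_laguerre (n + l)))) * (\<Prod>j<n. fact j ^ 2)"
    by (simp only: det_phi_monic_laguerre)
  have "(-1) ^ (Suc \<alpha> * n) * (-1) ^ (Suc \<alpha> * n) = (1 :: real)"
    by (simp flip: power_add)
  then show ?thesis
    using FG unfolding FU by (simp add: ac_simps)
qed

definition laguerre_mat :: "real \<Rightarrow> real \<Rightarrow> nat \<Rightarrow> nat \<Rightarrow> real mat" where
  "laguerre_mat a b \<alpha> n = mat (\<alpha> + 1) (\<alpha> + 1) (\<lambda>(i, j).
     if j = 0 then laguerre 0 (int (n + i)) a else laguerre (j - 1) (int n + int i + 1 - int j) b)"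

lemma phi_monic_laguerre:
  assumes "r \<le> \<alpha>" and "l \<le> \<alpha>"
  shows "phi a b \<alpha> r (monic_laguerre (n + l))
    = (if r = 0 then 1 else (-1) ^ (r - 1) / fact (r - 1)) * ((-1) ^ (n + l) * fact (n + l))
      * laguerre_mat a b \<alpha> n $$ (l, r)"
proof (cases r)
  case 0
  then show ?thesis
    using assms laguerre_of_nat[of 0 "n + l" a]
    by (simp add: phi_def monic_laguerre_def laguerre_mat_def)
next
  case (Suc s)
  have "int n + int l + 1 - int r = int (n + l) - int s"
    using Suc by simp
  then show ?thesis
    using Suc assms
    by (simp add: phi_def monic_laguerre_def laguerre_mat_def pcompose_smult coeff_pcompose_laguerre_poly
        add_diff_eq)
qed

lemma det_phi_monic_laguerre_eq_det_laguerre_mat: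
  "det (mat (Suc \<alpha>) (Suc \<alpha>) (\<lambda>(r, l). phi a b \<alpha> r (monic_laguerre (n + l))))
    = (\<Prod>r<Suc \<alpha>. if r = 0 then 1 else (-1) ^ (r - 1) / fact (r - 1))
      * (\<Prod>l<Suc \<alpha>. (-1) ^ (n + l) * fact (n + l)) * det (laguerre_mat a b \<alpha> n)"
proof -
  have L: "(laguerre_mat a b \<alpha> n)\<^sup>T \<in> carrier_mat (Suc \<alpha>) (Suc \<alpha>)"
    by (simp add: laguerre_mat_def)
  have "mat (Suc \<alpha>) (Suc \<alpha>) (\<lambda>(r, l). phi a b \<alpha> r (monic_laguerre (n + l)))
      = mat (Suc \<alpha>) (Suc \<alpha>) (\<lambda>(r, l). (if r = 0 then 1 else (-1) ^ (r - 1) / fact (r - 1))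
          * ((-1) ^ (n + l) * fact (n + l)) * (laguerre_mat a b \<alpha> n)\<^sup>T $$ (r, l))"
    by (rule eq_matI) (auto simp: phi_monic_laguerre laguerre_mat_def)
  then show ?thesis
    using det_scale_rows_cols[OF L] det_transpose[of "laguerre_mat a b \<alpha> n" "Suc \<alpha>"]
    by (simp add: laguerre_mat_def atLeast0LessThan)
qed

lemma prod_sign_powers:
  "(\<Prod>l<Suc \<alpha>. (-1 :: real) ^ (n + l)) * (\<Prod>s<\<alpha>. (-1) ^ s) = (-1) ^ (n + \<alpha> * (n + \<alpha>))"
proof (induction \<alpha>)
  case (Suc \<alpha>)
  have "(\<Prod>l<Suc (Suc \<alpha>). (-1 :: real) ^ (n + l)) * (\<Prod>s<Suc \<alpha>. (-1) ^ s)
      = ((\<Prod>l<Suc \<alpha>. (-1) ^ (n + l)) * (\<Prod>s<\<alpha>. (-1) ^ s)) * (-1) ^ (n + Suc \<alpha> + \<alpha>)"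
    by (simp add: power_add algebra_simps)
  also have "\<dots> = (-1) ^ (n + Suc \<alpha> * (n + Suc \<alpha>))"
    unfolding Suc.IH by (simp add: algebra_simps flip: power_add)
  finally show ?case .
qed simp

lemma Kbar_eq:
  "Kbar n \<alpha> = fact n * (\<Prod>j<n. fact j ^ 2)
    * ((\<Prod>r<Suc \<alpha>. if r = 0 then 1 else (-1) ^ (r - 1) / fact (r - 1))
       * (\<Prod>l<Suc \<alpha>. (-1) ^ (n + l) * fact (n + l)))"
proof -
  define P where "P = (\<Prod>l<Suc \<alpha>. fact (n + l) :: real)"
  define F where "F = (\<Prod>s<\<alpha>. fact s :: real)"
  define S where "S = (\<Prod>s<\<alpha>. (-1 :: real) ^ s)"
  define Sg where "Sg = (\<Prod>l<Suc \<alpha>. (-1 :: real) ^ (n + l))"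
  have "(\<Prod>i = 0..<n. fact i * fact (i + 1) :: real) = fact n * (\<Prod>j<n. fact j ^ 2)"
    by (induction n) (auto simp: power2_eq_square algebra_simps)
  moreover have "(\<Prod>i = 1..\<alpha> + 1. fact (n + i - 1) :: real) = P"
    using prod.shift_bounds_cl_Suc_ivl[of "\<lambda>i. fact (n + i - 1) :: real" 0 \<alpha>]
    by (simp add: P_def atLeast0AtMost lessThan_Suc_atMost)
  moreover have "(\<Prod>i = 1..<\<alpha>. fact i :: real) = F"
    unfolding F_def atLeast0LessThan[symmetric] by (cases \<alpha>) (simp_all add: prod.atLeast_Suc_lessThan)
  ultimately have K: "Kbar n \<alpha> = (-1) ^ (n + \<alpha> * (n + \<alpha>)) * (P * (fact n * (\<Prod>j<n. fact j ^ 2))) / F"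
    by (simp add: Kbar_def)
  have T: "(\<Prod>r<Suc \<alpha>. if r = 0 then 1 else (-1) ^ (r - 1) / fact (r - 1)) = S / F"
    unfolding S_def F_def by (subst prod.lessThan_Suc_shift) (simp add: prod_dividef)
  have C: "(\<Prod>l<Suc \<alpha>. (-1) ^ (n + l) * fact (n + l)) = Sg * P"
    unfolding Sg_def P_def by (rule prod.distrib)
  have sign: "(-1) ^ (n + \<alpha> * (n + \<alpha>)) = Sg * S"
    unfolding Sg_def S_def by (rule prod_sign_powers[symmetric])
  have "F \<noteq> 0"
    by (simp add: F_def)
  then show ?thesis
    unfolding T C K sign by (simp add: field_simps)
qed

theorem mainTheorem9:
  fixes n \<alpha> :: nat and a b :: real
  assumes "n \<ge> 1" and "a \<noteq> b"
  shows "Q n a b \<alpha> = Kbar n \<alpha> / (b - a) ^ \<alpha> *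
    det (mat (\<alpha> + 1) (\<alpha> + 1) (\<lambda>(i, j).
          if j = 0 then laguerre 0 (int (n + i)) a
          else laguerre (j - 1) (int n + int i + 1 - int j) b))"
proof -
  have "(b - a) ^ \<alpha> \<noteq> 0"
    using assms(2) by simp
  then have "det (hankel_mat a b \<alpha> n)
      = det (mat (Suc \<alpha>) (Suc \<alpha>) (\<lambda>(r, l). phi a b \<alpha> r (monic_laguerre (n + l))))
        * (\<Prod>j<n. fact j ^ 2) / (b - a) ^ \<alpha>"
    using det_hankel_mat_eq[of b a \<alpha> n] by (simp add: field_simps)
  then show ?thesis
    unfolding Q_eq_fact_det_hankel det_phi_monic_laguerre_eq_det_laguerre_mat Kbar_eq
    by (simp add: laguerre_mat_def field_simps)
qed

end
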